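(* Let $K=3m$ with $m\ge 3$ and suppose $t=KM/N=K-3$. Then the D2D coded caching rate $R=N/M-1$ is achievable with subpacketization $$F=\frac{2K(K-3)(K-3/2)}{3}=9m(m-1)(2m-1).$$
   Context: D2D coded caching setting: there are $N\ge 1$ files $W_1,\dots,W_N$ and $K\ge 2$ users, each with a cache of size $M$ files, $0<M\le N$, and $t:=KM/N$ is assumed to be a positive integer. A D2D coded caching scheme with (uncoded placement and) subpacketization $F\in\mathbb{N}_+$ is defined as follows. Fix a packet size $b\ge 1$; each file is a sequence of $F$ packets $W_n=(W_n^{(1)},\dots,W_n^{(F)})$, $W_n^{(j)}\in\{0,1\}^b$. Placement: each user $k\in[K]$ stores the packets $\{W_n^{(j)}:(n,j)\in Z_k\}$ for a fixed index set $Z_k\subseteq[N]\times[F]$ with $|Z_k|\le MF$ (independent of demands and file contents). Delivery: for every demand vector $\mathbf d=(d_1,\dots,d_K)\in[N]^K$, each user $k$ broadcasts to all other users $\ell_k(\mathbf d)\in\mathbb{N}$ blocks in $\{0,1\}^b$, each a deterministic function of the packets stored by user $k$; it is required that for all file contents each user $k$ can recover all $F$ packets of $W_{d_k}$ from its stored packets and the blocks sent by the other users. The rate is $R=\max_{\mathbf d}\frac{1}{F}\sum_{k=1}^K\ell_k(\mathbf d)$ (transmitted bits normalized by the file size $Fb$). The rate $R$ is achievable with subpacketization $F$ if such a scheme with rate $R$ exists for every packet size $b\ge 1$. *)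

theory Defs
  imports Complex_Main "HOL-Library.FuncSet"
begin

text \<open>A file library is W :: nat \<times> nat \<Rightarrow> bool list, W (n,j) being packet j of file n;
  it is valid for packet size b if every packet W (n,j), n in [N], j in [F], has length b.\<close>

definition valid_library :: "nat \<Rightarrow> nat \<Rightarrow> nat \<Rightarrow> (nat \<times> nat \<Rightarrow> bool list) \<Rightarrow> bool" where
  "valid_library N F b W \<longleftrightarrow> (\<forall>n\<in>{1..N}. \<forall>j\<in>{1..F}. length (W (n, j)) = b)"

definition stored :: "(nat \<times> nat) set \<Rightarrow> (nat \<times> nat \<Rightarrow> bool list) \<Rightarrow> (nat \<times> nat \<Rightarrow> bool list)" where
  "stored Z W = (\<lambda>x. if x \<in> Z then W x else [])"

definition demands :: "nat \<Rightarrow> nat \<Rightarrow> (nat \<Rightarrow> nat) set" where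
  "demands N K = {1..K} \<rightarrow>\<^sub>E {1..N}"

text \<open>A D2D coded caching scheme with N files, K users, cache size M, subpacketization F,
  packet size b and rate R. Z k: placement index set of user k; l k d: number of blocks
  broadcast by user k for demand d; enc k d: the broadcast blocks, a deterministic function of
  the packets stored by user k; dec k d: the decoder of user k, a function of its stored
  packets and the blocks sent by the other users.\<close>
definition d2d_scheme :: "nat \<Rightarrow> nat \<Rightarrow> real \<Rightarrow> nat \<Rightarrow> nat \<Rightarrow> real \<Rightarrow> bool" where
  "d2d_scheme N K M F b R \<longleftrightarrow>
    (\<exists>(Z :: nat \<Rightarrow> (nat \<times> nat) set)
      (l :: nat \<Rightarrow> (nat \<Rightarrow> nat) \<Rightarrow> nat)
      (enc :: nat \<Rightarrow> (nat \<Rightarrow> nat) \<Rightarrow> (nat \<times> nat \<Rightarrow> bool list) \<Rightarrow> bool list list)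
      (dec :: nat \<Rightarrow> (nat \<Rightarrow> nat) \<Rightarrow> (nat \<times> nat \<Rightarrow> bool list) \<Rightarrow> (nat \<Rightarrow> bool list list) \<Rightarrow> nat \<Rightarrow> bool list).
      (\<forall>k\<in>{1..K}. Z k \<subseteq> {1..N} \<times> {1..F} \<and> real (card (Z k)) \<le> M * real F) \<and>
      (\<forall>d\<in>demands N K. \<forall>W. valid_library N F b W \<longrightarrow>
         (\<forall>k\<in>{1..K}. length (enc k d (stored (Z k) W)) = l k d \<and>
                      (\<forall>blk\<in>set (enc k d (stored (Z k) W)). length blk = b)) \<and>
         (\<forall>k\<in>{1..K}. \<forall>j\<in>{1..F}.
            dec k d (stored (Z k) W)
              (\<lambda>k'. if k' \<in> {1..K} \<and> k' \<noteq> k then enc k' d (stored (Z k') W) else []) j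
            = W (d k, j))) \<and>
      R = Max {(\<Sum>k\<in>{1..K}. real (l k d)) / real F | d. d \<in> demands N K})"

definition achievable_with_subpacketization :: "nat \<Rightarrow> nat \<Rightarrow> real \<Rightarrow> real \<Rightarrow> nat \<Rightarrow> bool" where
  "achievable_with_subpacketization N K M R F \<longleftrightarrow>
     F \<ge> 1 \<and> (\<forall>b\<ge>1. d2d_scheme N K M F b R)"

end

theory Submission
  imports Defs "HOL-Library.Product_Lexorder"
begin

text \<open>Users are split into m groups of three. Every file is split into subpackets labelled (T, i),
  where T is a set of three users and i < copies T: there are 3 subpackets if T meets two groups,
  4 if it meets three groups and none if T is a group; user k caches exactly the subpackets whose
  label does not contain k. A user then misses 9(m-1)(2m-1) of the F = 9m(m-1)(2m-1) subpackets,
  the fraction 1/m = 1 - M/N. Each user k broadcasts 6m-3 blocks: for a pair a, b of users (the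
  two group mates of k, or two users in different groups, one of them k's) the XOR over all other
  users v of a subpacket of file d v labelled {a, b, v}. Since v lies in none of the other labels,
  v cancels the other summands from its cache. Every missing subpacket is delivered this way, so
  the rate is K(6m-3)/F = 1/(m-1) = N/M - 1.\<close>

section \<open>Delivery by XOR-coded transmissions\<close>

definition xor_blocks :: "nat \<Rightarrow> 'a set \<Rightarrow> ('a \<Rightarrow> bool list) \<Rightarrow> bool list" where
  "xor_blocks b S f = map (\<lambda>i. odd (card {v\<in>S. f v ! i})) [0..<b]"

lemma length_xor_blocks [simp]: "length (xor_blocks b S f) = b"
  by (simp add: xor_blocks_def)

lemma xor_blocks_cong: "(\<And>v. v \<in> S \<Longrightarrow> f v = g v) \<Longrightarrow> xor_blocks b S f = xor_blocks b S g"
  unfolding xor_blocks_def by (intro map_cong refl arg_cong[where f = odd] arg_cong[where f = card]) auto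

lemma map2_xor_blocks_remove:
  assumes "finite S" "v \<in> S" "length (f v) = b"
  shows "map2 (\<noteq>) (xor_blocks b S f) (xor_blocks b (S - {v}) f) = f v"
proof (rule nth_equalityI)
  fix i assume "i < length (map2 (\<noteq>) (xor_blocks b S f) (xor_blocks b (S - {v}) f))"
  then have i: "i < b" by simp
  have "{u\<in>S. f u ! i} = (if f v ! i then insert v else id) {u\<in>S - {v}. f u ! i}"
    using assms(2) by auto
  then show "map2 (\<noteq>) (xor_blocks b S f) (xor_blocks b (S - {v}) f) ! i = f v ! i"
    using i assms(1) by (simp add: xor_blocks_def)
qed (use assms(3) in simp)

definition position :: "'a list \<Rightarrow> 'a \<Rightarrow> nat" where
  "position xs x = (SOME i. i < length xs \<and> xs ! i = x)"

lemma nth_position: "x \<in> set xs \<Longrightarrow> position xs x < length xs \<and> xs ! position xs x = x"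
  unfolding position_def by (rule someI_ex) (simp add: in_set_conv_nth)

lemma bij_betw_position: "distinct xs \<Longrightarrow> bij_betw (position xs) (set xs) {..<length xs}"
proof (rule bij_betw_byWitness[where f' = "(!) xs"])
  assume "distinct xs"
  then show "\<forall>i\<in>{..<length xs}. position xs (xs ! i) = i"
    using nth_position by (metis lessThan_iff nth_eq_iff_index_eq nth_mem)
qed (auto simp: nth_position)

text \<open>Packets are labelled by L and numbered by the injection e; lacking p is the set of users not
  caching packet p. For each \<tau> \<in> Tr k, user k broadcasts the XOR over v \<in> recipients k \<tau> of
  packet payload k \<tau> v of the file demanded by v.\<close>
locale xor_delivery =
  fixes K F :: nat
    and L :: "'p set"
    and e :: "'p \<Rightarrow> nat"
    and lacking :: "'p \<Rightarrow> nat set"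
    and Tr :: "nat \<Rightarrow> 't::linorder set"
    and recipients :: "nat \<Rightarrow> 't \<Rightarrow> nat set"
    and payload :: "nat \<Rightarrow> 't \<Rightarrow> nat \<Rightarrow> 'p"
    and len :: nat
  assumes inj_e: "inj_on e L"
    and e_range: "e ` L \<subseteq> {1..F}"
    and finite_Tr: "k \<in> {1..K} \<Longrightarrow> finite (Tr k)"
    and card_Tr: "k \<in> {1..K} \<Longrightarrow> card (Tr k) \<le> len"
    and recipient_user: "k \<in> {1..K} \<Longrightarrow> \<tau> \<in> Tr k \<Longrightarrow> v \<in> recipients k \<tau> \<Longrightarrow> v \<in> {1..K}"
    and payload_in_L: "k \<in> {1..K} \<Longrightarrow> \<tau> \<in> Tr k \<Longrightarrow> v \<in> recipients k \<tau> \<Longrightarrow> payload k \<tau> v \<in> L"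
    and sender_has: "k \<in> {1..K} \<Longrightarrow> \<tau> \<in> Tr k \<Longrightarrow> v \<in> recipients k \<tau> \<Longrightarrow> k \<notin> lacking (payload k \<tau> v)"
    and side_information: "k \<in> {1..K} \<Longrightarrow> \<tau> \<in> Tr k \<Longrightarrow> v \<in> recipients k \<tau> \<Longrightarrow>
      v' \<in> recipients k \<tau> \<Longrightarrow> v' \<noteq> v \<Longrightarrow> v \<notin> lacking (payload k \<tau> v')"
    and all_served: "v \<in> {1..K} \<Longrightarrow> p \<in> L \<Longrightarrow> v \<in> lacking p \<Longrightarrow>
      \<exists>k\<in>{1..K}. \<exists>\<tau>\<in>Tr k. v \<in> recipients k \<tau> \<and> payload k \<tau> v = p"
begin

definition placement :: "nat \<Rightarrow> nat \<Rightarrow> (nat \<times> nat) set" where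
  "placement N k = {1..N} \<times> ({1..F} - e ` {p\<in>L. k \<in> lacking p})"

definition schedule :: "nat \<Rightarrow> 't list" where
  "schedule k = sorted_list_of_set (Tr k)"

definition coded_block ::
    "nat \<Rightarrow> (nat \<Rightarrow> nat) \<Rightarrow> (nat \<times> nat \<Rightarrow> bool list) \<Rightarrow> nat \<Rightarrow> 't \<Rightarrow> nat set \<Rightarrow> bool list" where
  "coded_block b d st k \<tau> S = xor_blocks b S (\<lambda>v. st (d v, e (payload k \<tau> v)))"

definition encode :: "nat \<Rightarrow> nat \<Rightarrow> (nat \<Rightarrow> nat) \<Rightarrow> (nat \<times> nat \<Rightarrow> bool list) \<Rightarrow> bool list list" where
  "encode b k d st = map (\<lambda>\<tau>. coded_block b d st k \<tau> (recipients k \<tau>)) (schedule k)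
     @ replicate (len - card (Tr k)) (replicate b False)"

definition source :: "nat \<Rightarrow> 'p \<Rightarrow> nat \<times> 't" where
  "source v p = (SOME (k, \<tau>). k \<in> {1..K} \<and> \<tau> \<in> Tr k \<and> v \<in> recipients k \<tau> \<and> payload k \<tau> v = p)"

definition decode ::
    "nat \<Rightarrow> nat \<Rightarrow> (nat \<Rightarrow> nat) \<Rightarrow> (nat \<times> nat \<Rightarrow> bool list) \<Rightarrow> (nat \<Rightarrow> bool list list) \<Rightarrow> nat \<Rightarrow> bool list"
  where
  "decode b v d st rcv j =
    (if j \<in> e ` {p\<in>L. v \<in> lacking p} then
       (case source v (the_inv_into L e j) of (k, \<tau>) \<Rightarrow>
          map2 (\<noteq>) (rcv k ! position (schedule k) \<tau>) (coded_block b d st k \<tau> (recipients k \<tau> - {v})))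
     else st (d v, j))"

lemma card_placement: "card (placement N k) = N * (F - card {p\<in>L. k \<in> lacking p})"
proof -
  have "e ` {p\<in>L. k \<in> lacking p} \<subseteq> {1..F}" and "inj_on e {p\<in>L. k \<in> lacking p}"
    using e_range inj_e by (auto intro: inj_on_subset)
  then show ?thesis
    unfolding placement_def card_cartesian_product
    by (simp add: card_Diff_subset finite_subset card_image)
qed

lemma in_placement: "n \<in> {1..N} \<Longrightarrow> p \<in> L \<Longrightarrow> k \<notin> lacking p \<Longrightarrow> (n, e p) \<in> placement N k"
  using e_range inj_e unfolding placement_def by (auto dest: inj_onD)

lemma source_serves:
  assumes "v \<in> {1..K}" "p \<in> L" "v \<in> lacking p" and "source v p = (k, \<tau>)"
  shows "k \<in> {1..K}" "\<tau> \<in> Tr k" "v \<in> recipients k \<tau>" "payload k \<tau> v = p"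
proof -
  have "\<exists>x. case x of (k, \<tau>) \<Rightarrow> k \<in> {1..K} \<and> \<tau> \<in> Tr k \<and> v \<in> recipients k \<tau> \<and> payload k \<tau> v = p"
    using all_served[OF assms(1-3)] by auto
  then have "case source v p of (k, \<tau>) \<Rightarrow> k \<in> {1..K} \<and> \<tau> \<in> Tr k \<and> v \<in> recipients k \<tau> \<and> payload k \<tau> v = p"
    unfolding source_def by (rule someI_ex)
  then show "k \<in> {1..K}" "\<tau> \<in> Tr k" "v \<in> recipients k \<tau>" "payload k \<tau> v = p"
    using assms(4) by simp_all
qed

lemma encode_blocks:
  assumes "k \<in> {1..K}"
  shows "length (encode b k d st) = len" "\<forall>blk\<in>set (encode b k d st). length blk = b"
  using finite_Tr[OF assms] card_Tr[OF assms]
  by (auto simp: encode_def schedule_def coded_block_def)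

lemma encode_at_position:
  assumes "k \<in> {1..K}" "\<tau> \<in> Tr k"
  shows "encode b k d st ! position (schedule k) \<tau> = coded_block b d st k \<tau> (recipients k \<tau>)"
proof -
  have "\<tau> \<in> set (schedule k)"
    using assms finite_Tr unfolding schedule_def by simp
  then show ?thesis
    using nth_position[of \<tau> "schedule k"] by (simp add: encode_def nth_append)
qed

lemma coded_block_cached:
  assumes d: "d \<in> demands N K" and k: "k \<in> {1..K}" "\<tau> \<in> Tr k" and S: "S \<subseteq> recipients k \<tau>"
    and cached: "\<And>u. u \<in> S \<Longrightarrow> s \<notin> lacking (payload k \<tau> u)"
  shows "coded_block b d (stored (placement N s) W) k \<tau> S = coded_block b d W k \<tau> S"
  unfolding coded_block_def
proof (rule xor_blocks_cong)
  fix u assume u: "u \<in> S"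
  then have "d u \<in> {1..N}"
    using d S recipient_user[OF k] unfolding demands_def by blast
  then have "(d u, e (payload k \<tau> u)) \<in> placement N s"
    using in_placement payload_in_L[OF k] S u cached by blast
  then show "stored (placement N s) W (d u, e (payload k \<tau> u)) = W (d u, e (payload k \<tau> u))"
    by (simp add: stored_def)
qed

lemma decode_correct:
  assumes d: "d \<in> demands N K" and W: "valid_library N F b W"
    and v: "v \<in> {1..K}" and j: "j \<in> {1..F}"
  shows "decode b v d (stored (placement N v) W)
      (\<lambda>k. if k \<in> {1..K} \<and> k \<noteq> v then encode b k d (stored (placement N k) W) else []) j = W (d v, j)"
proof (cases "j \<in> e ` {p\<in>L. v \<in> lacking p}")
  case False
  then have "(d v, j) \<in> placement N v"
    using d v j unfolding demands_def placement_def by auto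
  with False show ?thesis
    by (simp add: decode_def stored_def)
next
  case True
  then obtain p where p: "p \<in> L" "v \<in> lacking p" "j = e p" by blast
  obtain k \<tau> where src: "source v p = (k, \<tau>)" by fastforce
  note k\<tau> = source_serves[OF v p(1,2) src]
  have "k \<noteq> v" using sender_has[OF k\<tau>(1-3)] k\<tau>(4) p(2) by auto
  have sent: "coded_block b d (stored (placement N k) W) k \<tau> (recipients k \<tau>)
      = coded_block b d W k \<tau> (recipients k \<tau>)"
    using sender_has[OF k\<tau>(1,2)] by (intro coded_block_cached[OF d k\<tau>(1,2)]) auto
  have side: "coded_block b d (stored (placement N v) W) k \<tau> (recipients k \<tau> - {v})
      = coded_block b d W k \<tau> (recipients k \<tau> - {v})"
    using side_information[OF k\<tau>(1-3)] by (intro coded_block_cached[OF d k\<tau>(1,2)]) auto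
  have "decode b v d (stored (placement N v) W)
      (\<lambda>k. if k \<in> {1..K} \<and> k \<noteq> v then encode b k d (stored (placement N k) W) else []) j
    = map2 (\<noteq>) (coded_block b d W k \<tau> (recipients k \<tau>)) (coded_block b d W k \<tau> (recipients k \<tau> - {v}))"
    using True p k\<tau> \<open>k \<noteq> v\<close>
    by (simp add: decode_def the_inv_into_f_f[OF inj_e] src encode_at_position sent side)
  also have "\<dots> = W (d v, e (payload k \<tau> v))"
    unfolding coded_block_def
  proof (rule map2_xor_blocks_remove)
    show "finite (recipients k \<tau>)"
      using recipient_user[OF k\<tau>(1,2)] by (meson finite_atLeastAtMost finite_subset subsetI)
    have "d v \<in> {1..N}" "e (payload k \<tau> v) \<in> {1..F}"
      using d v e_range payload_in_L[OF k\<tau>(1-3)] unfolding demands_def by auto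
    then show "length (W (d v, e (payload k \<tau> v))) = b"
      using W unfolding valid_library_def by blast
  qed (fact k\<tau>(3))
  finally show ?thesis using k\<tau>(4) p(3) by simp
qed

lemma card_lacking_le: "card {p\<in>L. k \<in> lacking p} \<le> F"
proof -
  have "card {p\<in>L. k \<in> lacking p} = card (e ` {p\<in>L. k \<in> lacking p})"
    using inj_e by (auto intro: card_image[symmetric] inj_on_subset)
  also have "\<dots> \<le> card {1..F}"
    by (rule card_mono) (use e_range in auto)
  finally show ?thesis by simp
qed

theorem d2d_scheme:
  assumes "N \<ge> 1"
    and cache: "\<And>k. k \<in> {1..K} \<Longrightarrow> real N * (real F - real (card {p\<in>L. k \<in> lacking p})) \<le> M * real F"
  shows "d2d_scheme N K M F b (real (K * len) / real F)"
proof -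
  have "placement N k \<subseteq> {1..N} \<times> {1..F}" for k
    unfolding placement_def by auto
  moreover have "real (card (placement N k)) \<le> M * real F" if "k \<in> {1..K}" for k
    using cache[OF that] card_lacking_le by (simp add: card_placement)
  moreover have "restrict (\<lambda>_. 1) {1..K} \<in> demands N K"
    using \<open>N \<ge> 1\<close> unfolding demands_def by auto
  then have "{(\<Sum>k\<in>{1..K}. real len) / real F | d. d \<in> demands N K} = {real (K * len) / real F}"
    by auto
  ultimately show ?thesis
    unfolding d2d_scheme_def
    by (intro exI[of _ "placement N"] exI[of _ "\<lambda>_ _. len"] exI[of _ "encode b"] exI[of _ "decode b"])
      (use decode_correct in \<open>simp add: encode_blocks\<close>)
qed

end

section \<open>Users in groups of three\<close>

definition group_of :: "nat \<Rightarrow> nat" where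
  "group_of u = (u - 1) div 3"

definition user_group :: "nat \<Rightarrow> nat set" where
  "user_group g = {3 * g + 1, 3 * g + 2, 3 * g + 3}"

definition users :: "nat \<Rightarrow> nat set" where
  "users m = {1..3 * m}"

lemma mem_user_group: "x \<in> user_group g \<longleftrightarrow> 1 \<le> x \<and> group_of x = g"
  unfolding user_group_def group_of_def by (auto; presburger)

lemma mem_users: "x \<in> users m \<longleftrightarrow> 1 \<le> x \<and> group_of x < m"
  unfolding users_def group_of_def by (auto; presburger)

lemma finite_user_group [simp]: "finite (user_group g)" and card_user_group [simp]: "card (user_group g) = 3"
  unfolding user_group_def by auto

lemma finite_users [simp]: "finite (users m)" and card_users [simp]: "card (users m) = 3 * m"
  unfolding users_def by auto

lemma in_user_group_of: "1 \<le> u \<Longrightarrow> u \<in> user_group (group_of u)"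
  by (simp add: mem_user_group)

lemma user_group_subset_users: "g < m \<Longrightarrow> user_group g \<subseteq> users m"
  by (auto simp: mem_user_group mem_users)

lemma card_users_diff_user_group: "g < m \<Longrightarrow> card (users m - user_group g) = 3 * m - 3"
  by (simp add: card_Diff_subset user_group_subset_users)

lemma disjoint_user_groups: "g \<noteq> h \<Longrightarrow> user_group g \<inter> user_group h = {}"
  by (auto simp: mem_user_group)

text \<open>Whenever a, b lie in different groups, copies {a, b, v} is the number of users of these two
  groups outside {a, b, v} (lemma card_group_union_diff); they take turns sending the subpackets.\<close>
definition copies :: "nat set \<Rightarrow> nat" where
  "copies T = (if card (group_of ` T) = 2 then 3 else if card (group_of ` T) = 3 then 4 else 0)"

definition labels :: "nat \<Rightarrow> (nat set \<times> nat) set" where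
  "labels m = {(T, i). T \<subseteq> users m \<and> card T = 3 \<and> i < copies T}"

lemma copies_two_groups: "group_of a = group_of b \<Longrightarrow> group_of v \<noteq> group_of a \<Longrightarrow> copies {a, b, v} = 3"
  unfolding copies_def by (simp add: insert_commute)

lemma copies_three_groups:
  "group_of a \<noteq> group_of b \<Longrightarrow> group_of v \<noteq> group_of a \<Longrightarrow> group_of v \<noteq> group_of b \<Longrightarrow> copies {a, b, v} = 4"
  unfolding copies_def by (simp add: insert_commute)

lemma copies_one_group: "group_of ` T = {g} \<Longrightarrow> copies T = 0"
  unfolding copies_def by simp

definition group_union :: "nat \<Rightarrow> nat \<Rightarrow> nat set" where
  "group_union a b = user_group (group_of a) \<union> user_group (group_of b)"

lemma card_group_union_diff:
  assumes "1 \<le> a" "1 \<le> b" "1 \<le> v" "a \<noteq> b" "v \<noteq> a" "v \<noteq> b" "group_of a \<noteq> group_of b"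
  shows "card (group_union a b - {a, b, v}) = copies {a, b, v}"
proof -
  have card_union: "card (group_union a b) = 6"
    unfolding group_union_def using assms(7) by (simp add: card_Un_disjoint disjoint_user_groups)
  have ab: "{a, b} \<subseteq> group_union a b"
    using assms by (auto simp: group_union_def mem_user_group)
  show ?thesis
  proof (cases "group_of v = group_of a \<or> group_of v = group_of b")
    case True
    then have "{a, b, v} \<subseteq> group_union a b"
      using ab assms(3) by (auto simp: group_union_def mem_user_group)
    moreover have "copies {a, b, v} = 3"
      using True assms(7) copies_two_groups[of b v a] copies_two_groups[of a v b]
      by (auto simp: insert_commute)
    ultimately show ?thesis
      using card_union assms by (simp add: card_Diff_subset)
  next
    case False
    then have "group_union a b - {a, b, v} = group_union a b - {a, b}"
      by (auto simp: group_union_def mem_user_group)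
    then show ?thesis
      using False card_union ab assms copies_three_groups[of a b v] by (simp add: card_Diff_subset)
  qed
qed

definition rank :: "'a::linorder set \<Rightarrow> 'a \<Rightarrow> nat" where
  "rank S = position (sorted_list_of_set S)"

lemma bij_betw_rank: "finite S \<Longrightarrow> bij_betw (rank S) S {..<card S}"
  unfolding rank_def using bij_betw_position[of "sorted_list_of_set S"] by simp

definition intra_transmissions :: "nat \<Rightarrow> (nat \<times> nat \<times> nat) set" where
  "intra_transmissions k = {(a, b, i). a < b \<and> {a, b} = user_group (group_of k) - {k} \<and> i < 3}"

definition cross_transmissions :: "nat \<Rightarrow> nat \<Rightarrow> (nat \<times> nat \<times> nat) set" where
  "cross_transmissions m k = {(a, b, 0) | a b. a < b \<and> a \<in> users m \<and> b \<in> users m \<and>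
     group_of a \<noteq> group_of b \<and> k \<in> group_union a b - {a, b}}"

definition transmissions :: "nat \<Rightarrow> nat \<Rightarrow> (nat \<times> nat \<times> nat) set" where
  "transmissions m k = intra_transmissions k \<union> cross_transmissions m k"

definition recipients :: "nat \<Rightarrow> nat \<Rightarrow> nat \<times> nat \<times> nat \<Rightarrow> nat set" where
  "recipients m k = (\<lambda>(a, b, i). users m - {a, b, k})"

definition subpacket :: "nat \<Rightarrow> nat \<times> nat \<times> nat \<Rightarrow> nat \<Rightarrow> nat set \<times> nat" where
  "subpacket k = (\<lambda>(a, b, i) v.
     ({a, b, v}, if group_of a = group_of b then i else rank (group_union a b - {a, b, v}) k))"

lemma intra_transmissionsD:
  assumes "1 \<le> k" "(a, b, i) \<in> intra_transmissions k"
  shows "user_group (group_of k) = {a, b, k}" "group_of a = group_of k" "group_of b = group_of k"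
    "1 \<le> a" "1 \<le> b" "a \<noteq> k" "b \<noteq> k" "a < b" "i < 3"
proof -
  have ab: "{a, b} = user_group (group_of k) - {k}" "a < b" "i < 3"
    using assms(2) unfolding intra_transmissions_def by auto
  then show "user_group (group_of k) = {a, b, k}"
    using in_user_group_of[OF assms(1)] by auto
  have "a \<in> user_group (group_of k) - {k}" "b \<in> user_group (group_of k) - {k}"
    using ab(1) by blast+
  then show "group_of a = group_of k" "group_of b = group_of k" "1 \<le> a" "1 \<le> b" "a \<noteq> k" "b \<noteq> k"
    by (simp_all add: mem_user_group)
  show "a < b" "i < 3" by (fact ab(2,3))+
qed

lemma subpacket_intra:
  assumes k: "k \<in> users m" and \<tau>: "(a, b, i) \<in> intra_transmissions k"
    and v: "v \<in> recipients m k (a, b, i)"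
  shows "subpacket k (a, b, i) v \<in> labels m"
proof -
  have k1: "1 \<le> k" "group_of k < m" using k by (simp_all add: mem_users)
  note ab = intra_transmissionsD[OF k1(1) \<tau>]
  have v: "v \<in> users m" "v \<noteq> a" "v \<noteq> b" "v \<noteq> k"
    using v unfolding recipients_def by auto
  have "v \<notin> user_group (group_of k)"
    using ab(1) v(2-4) by simp
  then have "group_of v \<noteq> group_of k"
    using v(1) by (simp add: mem_users mem_user_group)
  then have "copies {a, b, v} = 3"
    using ab(2,3) by (simp add: copies_two_groups)
  moreover have "{a, b, v} \<subseteq> users m"
    using ab(2-5) k1 v(1) by (simp add: mem_users)
  moreover have "card {a, b, v} = 3"
    using ab(8) v by simp
  ultimately show ?thesis
    using ab(2,3,9) by (simp add: subpacket_def labels_def)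
qed

lemma subpacket_cross:
  assumes \<tau>: "(a, b, i) \<in> cross_transmissions m k" and v: "v \<in> recipients m k (a, b, i)"
  shows "subpacket k (a, b, i) v \<in> labels m"
proof -
  have ab: "a < b" "a \<in> users m" "b \<in> users m" "group_of a \<noteq> group_of b" "k \<in> group_union a b - {a, b}"
    using \<tau> unfolding cross_transmissions_def by auto
  have v: "v \<in> users m" "v \<noteq> a" "v \<noteq> b" "v \<noteq> k"
    using v unfolding recipients_def by auto
  have "card (group_union a b - {a, b, v}) = copies {a, b, v}"
    using ab v by (intro card_group_union_diff) (simp_all add: mem_users)
  moreover have "k \<in> group_union a b - {a, b, v}"
    using ab(5) v(4) by simp
  then have "rank (group_union a b - {a, b, v}) k < card (group_union a b - {a, b, v})"
    using bij_betw_apply[OF bij_betw_rank, of "group_union a b - {a, b, v}" k] by (simp add: group_union_def)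
  moreover have "card {a, b, v} = 3"
    using ab(1) v by simp
  ultimately show ?thesis
    using ab(2-4) v(1) by (simp add: subpacket_def labels_def)
qed

lemma served_intra:
  assumes ab: "a \<in> users m" "b \<in> users m" "a < b" "group_of a = group_of b"
    and v: "v \<in> users m" "v \<noteq> a" "v \<noteq> b" and i: "i < copies {a, b, v}"
  shows "\<exists>k\<in>users m. \<exists>\<tau>\<in>transmissions m k. v \<in> recipients m k \<tau> \<and> subpacket k \<tau> v = ({a, b, v}, i)"
proof -
  have a1: "1 \<le> a" "1 \<le> b" "group_of a < m"
    using ab by (simp_all add: mem_users)
  have ab_group: "{a, b} \<subseteq> user_group (group_of a)"
    using a1 ab(4) by (simp add: mem_user_group)
  then have "card (user_group (group_of a) - {a, b}) = 1"
    using ab(3) by (simp add: card_Diff_subset)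
  then obtain k where k: "user_group (group_of a) - {a, b} = {k}"
    by (rule card_1_singletonE)
  then have "k \<in> user_group (group_of a)" "k \<noteq> a" "k \<noteq> b"
    by blast+
  then have k1: "1 \<le> k" "group_of k = group_of a" "k \<noteq> a" "k \<noteq> b"
    by (simp_all add: mem_user_group)
  have "group_of v \<noteq> group_of a"
  proof
    assume "group_of v = group_of a"
    then have "group_of ` {a, b, v} = {group_of a}" using ab(4) by auto
    then show False using i copies_one_group by simp
  qed
  then have "copies {a, b, v} = 3"
    using ab(4) by (simp add: copies_two_groups)
  moreover have "user_group (group_of k) - {k} = {a, b}"
    using k k1 ab_group by auto
  ultimately have "(a, b, i) \<in> transmissions m k"
    using ab(3) i by (simp add: transmissions_def intra_transmissions_def)
  moreover have "k \<in> users m"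
    using k1 a1 by (simp add: mem_users)
  moreover have "v \<in> recipients m k (a, b, i)"
    using v k1(2) \<open>group_of v \<noteq> group_of a\<close> by (auto simp: recipients_def)
  moreover have "subpacket k (a, b, i) v = ({a, b, v}, i)"
    using ab(4) by (simp add: subpacket_def)
  ultimately show ?thesis by blast
qed

lemma served_cross:
  assumes ab: "a \<in> users m" "b \<in> users m" "a < b" "group_of a \<noteq> group_of b"
    and v: "v \<in> users m" "v \<noteq> a" "v \<noteq> b" and i: "i < copies {a, b, v}"
  shows "\<exists>k\<in>users m. \<exists>\<tau>\<in>transmissions m k. v \<in> recipients m k \<tau> \<and> subpacket k \<tau> v = ({a, b, v}, i)"
proof -
  define S where "S = group_union a b - {a, b, v}"
  have "card S = copies {a, b, v}"
    unfolding S_def using ab v by (intro card_group_union_diff) (simp_all add: mem_users)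
  moreover have "finite S"
    unfolding S_def group_union_def by simp
  ultimately have "i \<in> rank S ` S"
    using bij_betw_imp_surj_on[OF bij_betw_rank, of S] i by simp
  then obtain k where k: "k \<in> S" "rank S k = i" by blast
  have "group_union a b \<subseteq> users m"
    using ab(1,2) by (simp add: group_union_def user_group_subset_users mem_users)
  then have "k \<in> users m"
    using k(1) unfolding S_def by blast
  moreover have "(a, b, 0) \<in> transmissions m k"
    using ab k(1) unfolding S_def transmissions_def cross_transmissions_def by blast
  moreover have "v \<in> recipients m k (a, b, 0)"
    using v k(1) unfolding S_def recipients_def by blast
  moreover have "subpacket k (a, b, 0) v = ({a, b, v}, i)"
    using ab(4) k(2) unfolding S_def subpacket_def by simp
  ultimately show ?thesis by blast
qed

lemma card_3_obtain:
  fixes T :: "'a::linorder set"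
  assumes "card T = 3" "v \<in> T"
  obtains a b where "T = {a, b, v}" "a < b" "a \<noteq> v" "b \<noteq> v"
proof -
  have "finite T"
    using assms(1) by (simp add: card_ge_0_finite)
  then have "card (T - {v}) = 2"
    using assms by (simp add: card_Diff_singleton_if)
  then obtain x y where xy: "T - {v} = {x, y}" "x \<noteq> y"
    by (auto simp: card_2_iff)
  then have "T = {x, y, v}" "T = {y, x, v}" "x \<noteq> v" "y \<noteq> v"
    using assms(2) by auto
  then show ?thesis
    using that[of x y] that[of y x] xy(2) by (metis neqE)
qed

lemma all_served:
  assumes v: "v \<in> users m" and p: "p \<in> labels m" "v \<in> fst p"
  shows "\<exists>k\<in>users m. \<exists>\<tau>\<in>transmissions m k. v \<in> recipients m k \<tau> \<and> subpacket k \<tau> v = p"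
proof -
  obtain T i where Ti: "p = (T, i)" "T \<subseteq> users m" "card T = 3" "i < copies T"
    using p(1) unfolding labels_def by auto
  then obtain a b where T: "T = {a, b, v}" "a < b" "a \<noteq> v" "b \<noteq> v"
    using p(2) by (metis card_3_obtain fst_conv)
  have "a \<in> users m" "b \<in> users m"
    using Ti(2) T(1) by auto
  then show ?thesis
    using served_intra[of a m b v i] served_cross[of a m b v i] T v Ti(1,4)
    by (cases "group_of a = group_of b") auto
qed

lemma intra_transmissions_subset:
  "intra_transmissions k \<subseteq> {Min (user_group (group_of k) - {k})} \<times> {Max (user_group (group_of k) - {k})} \<times> {..<3}"
proof
  fix \<tau> assume "\<tau> \<in> intra_transmissions k"
  then obtain a b i where ab: "\<tau> = (a, b, i)" "a < b" "{a, b} = user_group (group_of k) - {k}" "i < 3"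
    unfolding intra_transmissions_def by auto
  have "Min {a, b} = a" "Max {a, b} = b"
    using ab(2) by (simp_all add: min_def max_def)
  then show "\<tau> \<in> {Min (user_group (group_of k) - {k})} \<times> {Max (user_group (group_of k) - {k})} \<times> {..<3}"
    using ab by simp
qed

lemma cross_transmissions_subset:
  assumes "1 \<le> k"
  shows "cross_transmissions m k \<subseteq>
    (\<lambda>(x, y). (min x y, max x y, 0)) ` ((user_group (group_of k) - {k}) \<times> (users m - user_group (group_of k)))"
proof
  fix \<tau> assume "\<tau> \<in> cross_transmissions m k"
  then obtain a b where ab: "\<tau> = (a, b, 0)" "a < b" "a \<in> users m" "b \<in> users m"
    "group_of a \<noteq> group_of b" "k \<in> group_union a b - {a, b}"
    unfolding cross_transmissions_def by auto
  have "1 \<le> a" "1 \<le> b" using ab(3,4) by (simp_all add: mem_users)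
  then consider "group_of k = group_of a" "a \<in> user_group (group_of k) - {k}" "b \<notin> user_group (group_of k)"
    | "group_of k = group_of b" "b \<in> user_group (group_of k) - {k}" "a \<notin> user_group (group_of k)"
    using ab(5,6) assms by (auto simp: group_union_def mem_user_group)
  then show "\<tau> \<in> (\<lambda>(x, y). (min x y, max x y, 0)) `
      ((user_group (group_of k) - {k}) \<times> (users m - user_group (group_of k)))"
  proof cases
    case 1
    then have "(a, b) \<in> (user_group (group_of k) - {k}) \<times> (users m - user_group (group_of k))"
      using ab(4) by simp
    then show ?thesis
      by (rule rev_image_eqI) (use ab(1,2) in simp)
  next
    case 2
    then have "(b, a) \<in> (user_group (group_of k) - {k}) \<times> (users m - user_group (group_of k))"
      using ab(3) by simp
    then show ?thesis
      by (rule rev_image_eqI) (use ab(1,2) in simp)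
  qed
qed

lemma card_transmissions:
  assumes k: "k \<in> users m"
  shows "finite (transmissions m k)" "card (transmissions m k) \<le> 6 * m - 3"
proof -
  have k1: "1 \<le> k" "group_of k < m"
    using k by (simp_all add: mem_users)
  let ?D = "(user_group (group_of k) - {k}) \<times> (users m - user_group (group_of k))"
  let ?f = "\<lambda>(x, y). (min x y, max x y, 0 :: nat)"
  have "card (cross_transmissions m k) \<le> card (?f ` ?D)"
    by (rule card_mono[OF _ cross_transmissions_subset[OF k1(1)]]) simp
  also have "\<dots> \<le> card ?D"
    by (rule card_image_le) simp
  also have "\<dots> = 2 * (3 * m - 3)"
    using in_user_group_of[OF k1(1)] card_users_diff_user_group[OF k1(2)]
    by (simp add: card_cartesian_product)
  finally have "card (cross_transmissions m k) \<le> 2 * (3 * m - 3)" .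
  moreover have "card (intra_transmissions k) \<le> 3"
    using card_mono[OF _ intra_transmissions_subset] by (simp add: card_cartesian_product)
  moreover have "finite (intra_transmissions k)" "finite (cross_transmissions m k)"
    using finite_subset[OF intra_transmissions_subset] finite_subset[OF cross_transmissions_subset[OF k1(1)]]
    by simp_all
  ultimately show "finite (transmissions m k)" "card (transmissions m k) \<le> 6 * m - 3"
    unfolding transmissions_def using card_Un_le[of "intra_transmissions k" "cross_transmissions m k"] k1
    by simp_all
qed

lemma subpacket_facts:
  assumes k: "k \<in> users m" and \<tau>: "\<tau> \<in> transmissions m k" and v: "v \<in> recipients m k \<tau>"
  shows "v \<in> users m" "subpacket k \<tau> v \<in> labels m" "k \<notin> fst (subpacket k \<tau> v)"
    and "v' \<in> recipients m k \<tau> \<Longrightarrow> v' \<noteq> v \<Longrightarrow> v \<notin> fst (subpacket k \<tau> v')"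
proof -
  obtain a b i where \<tau>_eq: "\<tau> = (a, b, i)"
    by (cases \<tau>)
  have "k \<notin> {a, b}"
    using \<tau> intra_transmissionsD(6,7)[of k a b i] k unfolding \<tau>_eq transmissions_def cross_transmissions_def
    by (auto simp: mem_users)
  then show "v \<in> users m" "k \<notin> fst (subpacket k \<tau> v)"
    using v unfolding \<tau>_eq by (auto simp: recipients_def subpacket_def)
  show "subpacket k \<tau> v \<in> labels m"
    using \<tau> subpacket_intra[OF k] subpacket_cross v unfolding \<tau>_eq transmissions_def by blast
  show "v \<notin> fst (subpacket k \<tau> v')" if "v' \<in> recipients m k \<tau>" "v' \<noteq> v"
    using that v unfolding \<tau>_eq by (auto simp: recipients_def subpacket_def)
qed

lemma xor_delivery_groups:
  assumes "bij_betw e (labels m) {1..F}"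
  shows "xor_delivery (3 * m) F (labels m) e fst (transmissions m) (recipients m) subpacket (6 * m - 3)"
proof -
  have "{1..3 * m} = users m"
    by (simp add: users_def)
  then show ?thesis
    unfolding xor_delivery_def using assms card_transmissions subpacket_facts all_served
    by (simp add: bij_betw_def)
qed

section \<open>Counting the subpackets missed by a user\<close>

definition outside :: "nat \<Rightarrow> nat \<Rightarrow> nat set" where
  "outside m k = users m - user_group (group_of k)"

definition mate_params :: "nat \<Rightarrow> nat \<Rightarrow> (nat \<times> nat \<times> nat) set" where
  "mate_params m k = (user_group (group_of k) - {k}) \<times> outside m k \<times> {..<3}"

definition mate_label :: "nat \<Rightarrow> nat \<times> nat \<times> nat \<Rightarrow> nat set \<times> nat" where
  "mate_label k = (\<lambda>(x, y, i). ({k, x, y}, i))"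

definition pair_params :: "nat \<Rightarrow> nat \<Rightarrow> (nat \<times> nat) set" where
  "pair_params m k = outside m k \<times> {..<3}"

definition pair_label :: "nat \<Rightarrow> nat \<times> nat \<Rightarrow> nat set \<times> nat" where
  "pair_label k = (\<lambda>(z, i). (insert k (user_group (group_of z) - {z}), i))"

definition spread_params :: "nat \<Rightarrow> nat \<Rightarrow> (nat \<times> nat \<times> nat) set" where
  "spread_params m k = (SIGMA x:outside m k. (outside m k - user_group (group_of x)) \<times> {..<2})"

text \<open>Both orders of the pair x, y occur in spread_params; the order supplies the
  high bit of the subpacket index, which ranges over 4 values.\<close>
definition spread_label :: "nat \<Rightarrow> nat \<times> nat \<times> nat \<Rightarrow> nat set \<times> nat" where
  "spread_label k = (\<lambda>(x, y, j). ({k, x, y}, (if x < y then 2 else 0) + j))"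

lemma mem_outside: "y \<in> outside m k \<longleftrightarrow> 1 \<le> y \<and> group_of y < m \<and> group_of y \<noteq> group_of k"
  by (auto simp: outside_def mem_users mem_user_group)

lemma mate_labels_subset:
  assumes k: "k \<in> users m"
  shows "mate_label k ` mate_params m k \<subseteq> {p\<in>labels m. k \<in> fst p}"
proof (rule image_subsetI)
  fix \<tau> assume "\<tau> \<in> mate_params m k"
  moreover obtain x y i where \<tau>: "\<tau> = (x, y, i)" by (cases \<tau>)
  ultimately have x: "x \<in> user_group (group_of k)" "x \<noteq> k" and y: "y \<in> outside m k" and i: "i < 3"
    by (auto simp: mate_params_def)
  have "group_of x = group_of k" "group_of y \<noteq> group_of k" "y \<noteq> k" "y \<noteq> x"
    using x y by (auto simp: mem_user_group mem_outside)
  moreover have "{k, x, y} \<subseteq> users m"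
    using k x y user_group_subset_users[of "group_of k" m] by (auto simp: outside_def mem_users)
  ultimately show "mate_label k \<tau> \<in> {p\<in>labels m. k \<in> fst p}"
    using \<tau> x(2) i copies_two_groups[of k x y] by (simp add: mate_label_def labels_def)
qed

lemma pair_labels_subset:
  assumes k: "k \<in> users m"
  shows "pair_label k ` pair_params m k \<subseteq> {p\<in>labels m. k \<in> fst p}"
proof (rule image_subsetI)
  fix \<tau> assume "\<tau> \<in> pair_params m k"
  moreover obtain z i where \<tau>: "\<tau> = (z, i)" by (cases \<tau>)
  ultimately have z: "1 \<le> z" "group_of z < m" "group_of z \<noteq> group_of k" and i: "i < 3"
    by (auto simp: pair_params_def mem_outside)
  have "card (user_group (group_of z) - {z}) = 2"
    using in_user_group_of[OF z(1)] by simp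
  then obtain x y where xy: "user_group (group_of z) - {z} = {x, y}" "x \<noteq> y"
    by (auto simp: card_2_iff)
  then have "x \<in> user_group (group_of z)" "y \<in> user_group (group_of z)"
    by blast+
  then have xy_group: "group_of x = group_of z" "group_of y = group_of z" "1 \<le> x" "1 \<le> y"
    by (simp_all add: mem_user_group)
  then have "k \<noteq> x" "k \<noteq> y" "copies {k, x, y} = 3"
    using z(3) copies_two_groups[of x y k] by (auto simp: insert_commute)
  moreover have "{k, x, y} \<subseteq> users m"
    using k z(2) xy_group by (simp add: mem_users)
  ultimately show "pair_label k \<tau> \<in> {p\<in>labels m. k \<in> fst p}"
    using \<tau> xy i by (simp add: pair_label_def labels_def)
qed

lemma spread_labels_subset:
  assumes k: "k \<in> users m"
  shows "spread_label k ` spread_params m k \<subseteq> {p\<in>labels m. k \<in> fst p}"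
proof (rule image_subsetI)
  fix \<tau> assume "\<tau> \<in> spread_params m k"
  moreover obtain x y j where \<tau>: "\<tau> = (x, y, j)" by (cases \<tau>)
  ultimately have x: "x \<in> outside m k" and y: "y \<in> outside m k" "y \<notin> user_group (group_of x)" and j: "j < 2"
    by (auto simp: spread_params_def)
  have "group_of x \<noteq> group_of k" "group_of y \<noteq> group_of k" "group_of y \<noteq> group_of x"
    using x y by (auto simp: mem_outside mem_user_group)
  then have "copies {k, x, y} = 4" "card {k, x, y} = 3"
    using copies_three_groups[of k x y] by (auto simp: card_insert_if)
  moreover have "{k, x, y} \<subseteq> users m"
    using k x y by (auto simp: outside_def)
  ultimately show "spread_label k \<tau> \<in> {p\<in>labels m. k \<in> fst p}"
    using \<tau> j by (simp add: spread_label_def labels_def)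
qed

lemma mate_label_cover:
  assumes "x \<in> users m" "y \<in> users m" "x \<noteq> k" "group_of x = group_of k" "group_of y \<noteq> group_of k" "i < 3"
  shows "({k, x, y}, i) \<in> mate_label k ` mate_params m k"
proof (rule rev_image_eqI)
  show "(x, y, i) \<in> mate_params m k"
    using assms by (simp add: mate_params_def mem_outside mem_user_group mem_users)
qed (simp add: mate_label_def)

lemma pair_label_cover:
  assumes "x \<in> users m" "y \<in> users m" "x \<noteq> y" "group_of x = group_of y" "group_of x \<noteq> group_of k"
    and "i < 3"
  shows "({k, x, y}, i) \<in> pair_label k ` pair_params m k"
proof -
  have xy: "{x, y} \<subseteq> user_group (group_of x)"
    using assms(1-4) by (simp add: mem_users mem_user_group)
  then have "card (user_group (group_of x) - {x, y}) = 1"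
    using assms(3) by (simp add: card_Diff_subset)
  then obtain z where z: "user_group (group_of x) - {x, y} = {z}"
    by (rule card_1_singletonE)
  then have "z \<in> user_group (group_of x)" "z \<noteq> x" "z \<noteq> y"
    by blast+
  then have z_group: "group_of z = group_of x" "1 \<le> z"
    by (simp_all add: mem_user_group)
  then have "user_group (group_of z) - {z} = {x, y}"
    using z xy by auto
  moreover have "(z, i) \<in> pair_params m k"
    using assms(1,5,6) z_group by (simp add: pair_params_def mem_outside mem_users)
  ultimately show ?thesis
    by (intro rev_image_eqI[of "(z, i)"]) (simp_all add: pair_label_def)
qed

lemma spread_label_cover:
  assumes "x \<in> outside m k" "y \<in> outside m k" "group_of x \<noteq> group_of y" "i < 4"
  shows "({k, x, y}, i) \<in> spread_label k ` spread_params m k"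
proof (rule image_eqI)
  define \<tau> where "\<tau> = (if (2 \<le> i) = (x < y) then (x, y, i mod 2) else (y, x, i mod 2))"
  have "x \<noteq> y"
    using assms(3) by auto
  then show "({k, x, y}, i) = spread_label k \<tau>"
    unfolding \<tau>_def using assms(4) by (auto simp: spread_label_def insert_commute; presburger)
  show "\<tau> \<in> spread_params m k"
    unfolding \<tau>_def using assms(1-3) by (auto simp: spread_params_def mem_user_group)
qed

lemma triple_label_cover:
  assumes "x \<in> users m" "y \<in> users m" "x \<noteq> y" "x \<noteq> k" "y \<noteq> k" "i < copies {x, y, k}"
  shows "({x, y, k}, i) \<in>
    mate_label k ` mate_params m k \<union> pair_label k ` pair_params m k \<union> spread_label k ` spread_params m k"
proof -
  have T: "{x, y, k} = {k, x, y}" "{x, y, k} = {k, y, x}"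
    by auto
  have not_one_group: "\<not> (group_of x = group_of k \<and> group_of y = group_of k)"
    using assms(6) copies_one_group[of "{x, y, k}" "group_of k"] by auto
  have i3: "i < 3" if "group_of x = group_of y \<or> group_of x = group_of k \<or> group_of y = group_of k"
    using assms(6) that not_one_group copies_two_groups[of x y k] copies_two_groups[of k x y]
      copies_two_groups[of k y x] by (auto simp: insert_commute)
  consider "group_of x = group_of k" | "group_of y = group_of k"
    | "group_of x \<noteq> group_of k" "group_of y \<noteq> group_of k" "group_of x = group_of y"
    | "group_of x \<noteq> group_of k" "group_of y \<noteq> group_of k" "group_of x \<noteq> group_of y"
    by blast
  then show ?thesis
  proof cases
    case 1
    then show ?thesis
      using mate_label_cover[of x m y k i] T i3 not_one_group assms(1,2,4) by simp
  next
    case 2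
    then show ?thesis
      using mate_label_cover[of y m x k i] T i3 not_one_group assms(1,2,5) by simp
  next
    case 3
    then show ?thesis
      using pair_label_cover[of x m y k i] T i3 assms(1-3) by simp
  next
    case 4
    then show ?thesis
      using spread_label_cover[of x m k y i] T copies_three_groups[of x y k] assms(1,2,6)
      by (simp add: mem_outside mem_users)
  qed
qed

lemma labels_containing_subset:
  "{p\<in>labels m. k \<in> fst p} \<subseteq>
    mate_label k ` mate_params m k \<union> pair_label k ` pair_params m k \<union> spread_label k ` spread_params m k"
proof
  fix p assume p: "p \<in> {p\<in>labels m. k \<in> fst p}"
  obtain T i where p_eq: "p = (T, i)"
    by (cases p)
  have T: "T \<subseteq> users m" "card T = 3" "i < copies T" "k \<in> T"
    using p unfolding p_eq labels_def by auto
  obtain x y where "T = {x, y, k}" "x < y" "x \<noteq> k" "y \<noteq> k"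
    using card_3_obtain[OF T(2,4)] by blast
  then show "p \<in>
    mate_label k ` mate_params m k \<union> pair_label k ` pair_params m k \<union> spread_label k ` spread_params m k"
    using T triple_label_cover[of x m y k i] unfolding p_eq by simp
qed

lemma inj_on_mate_label: "inj_on (mate_label k) (mate_params m k)"
proof (rule inj_onI)
  fix \<tau> \<tau>' assume params: "\<tau> \<in> mate_params m k" "\<tau>' \<in> mate_params m k"
    and eq: "mate_label k \<tau> = mate_label k \<tau>'"
  obtain x y i x' y' i' where \<tau>: "\<tau> = (x, y, i)" "\<tau>' = (x', y', i')"
    by (cases \<tau>, cases \<tau>')
  then have groups: "group_of x = group_of k" "group_of x' = group_of k" "x \<noteq> k" "x' \<noteq> k"
    "group_of y \<noteq> group_of k" "group_of y' \<noteq> group_of k"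
    using params by (auto simp: mate_params_def mem_user_group mem_outside)
  have "{k, x, y} = {k, x', y'}" "i = i'"
    using eq by (simp_all add: \<tau> mate_label_def)
  then have "x \<in> {k, x', y'}" "y \<in> {k, x', y'}" "x' \<in> {k, x, y}"
    by blast+
  then have "x = x'" "y = y'"
    using groups by auto
  then show "\<tau> = \<tau>'"
    using \<open>i = i'\<close> \<tau> by simp
qed

lemma inj_on_pair_label: "inj_on (pair_label k) (pair_params m k)"
proof (rule inj_onI)
  fix \<tau> \<tau>' assume params: "\<tau> \<in> pair_params m k" "\<tau>' \<in> pair_params m k"
    and eq: "pair_label k \<tau> = pair_label k \<tau>'"
  obtain z i z' i' where \<tau>: "\<tau> = (z, i)" "\<tau>' = (z', i')"
    by (cases \<tau>, cases \<tau>')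
  then have z: "1 \<le> z" "1 \<le> z'" "group_of z \<noteq> group_of k" "group_of z' \<noteq> group_of k"
    using params by (auto simp: pair_params_def mem_outside)
  then have "k \<notin> user_group (group_of z) - {z}" "k \<notin> user_group (group_of z') - {z'}"
    by (simp_all add: mem_user_group)
  moreover have "insert k (user_group (group_of z) - {z}) = insert k (user_group (group_of z') - {z'})"
    and "i = i'"
    using eq by (simp_all add: \<tau> pair_label_def)
  ultimately have mates: "user_group (group_of z) - {z} = user_group (group_of z') - {z'}"
    by (simp add: insert_ident)
  have "card (user_group (group_of z) - {z}) = 2"
    using in_user_group_of[OF z(1)] by simp
  then obtain u where "u \<in> user_group (group_of z) - {z}"
    by (metis card.empty all_not_in_conv zero_neq_numeral)
  moreover from this have "u \<in> user_group (group_of z') - {z'}"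
    using mates by simp
  ultimately have "group_of z = group_of z'"
    by (simp add: mem_user_group)
  then have "z' \<in> user_group (group_of z)"
    using z(2) by (simp add: mem_user_group)
  moreover have "z' \<notin> user_group (group_of z) - {z}"
    unfolding mates by simp
  ultimately show "\<tau> = \<tau>'"
    using \<tau> \<open>i = i'\<close> by blast
qed

lemma inj_on_spread_label: "inj_on (spread_label k) (spread_params m k)"
proof (rule inj_onI)
  fix \<tau> \<tau>' assume params: "\<tau> \<in> spread_params m k" "\<tau>' \<in> spread_params m k"
    and eq: "spread_label k \<tau> = spread_label k \<tau>'"
  obtain x y j x' y' j' where \<tau>: "\<tau> = (x, y, j)" "\<tau>' = (x', y', j')"
    by (cases \<tau>, cases \<tau>')
  then have distinct: "x \<noteq> k" "y \<noteq> k" "x' \<noteq> k" "y' \<noteq> k" "x \<noteq> y" "x' \<noteq> y'" "j < 2" "j' < 2"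
    using params by (auto simp: spread_params_def mem_outside mem_user_group)
  have "{k, x, y} = {k, x', y'}"
    and index: "(if x < y then 2 else 0) + j = (if x' < y' then 2 else 0) + j'"
    using eq by (simp_all add: \<tau> spread_label_def)
  then have "{x, y} = {x', y'}"
    using distinct(1-4) by (auto simp: insert_eq_iff)
  moreover have "(x < y) = (x' < y')" "j = j'"
    using index distinct(7,8) by (auto split: if_splits)
  ultimately have "x = x'" "y = y'"
    using distinct(5) unfolding doubleton_eq_iff by auto
  then show "\<tau> = \<tau>'"
    using \<tau> \<open>j = j'\<close> by simp
qed

lemma disjoint_label_families:
  "mate_label k ` mate_params m k \<inter> pair_label k ` pair_params m k = {}"
  "mate_label k ` mate_params m k \<inter> spread_label k ` spread_params m k = {}"
  "pair_label k ` pair_params m k \<inter> spread_label k ` spread_params m k = {}"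
proof -
  have mate: "\<exists>x\<in>fst p - {k}. group_of x = group_of k" if p: "p \<in> mate_label k ` mate_params m k" for p
  proof -
    obtain x y i where "p = ({k, x, y}, i)" "x \<in> user_group (group_of k)" "x \<noteq> k"
      using p by (auto simp: mate_label_def mate_params_def)
    then show ?thesis
      by (auto simp: mem_user_group)
  qed
  have pair: "\<forall>x\<in>fst p - {k}. group_of x \<noteq> group_of k"
    "\<forall>x\<in>fst p - {k}. \<forall>y\<in>fst p - {k}. group_of x = group_of y"
    if p: "p \<in> pair_label k ` pair_params m k" for p
  proof -
    obtain z i where "p = (insert k (user_group (group_of z) - {z}), i)" "group_of z \<noteq> group_of k"
      using p by (auto simp: pair_label_def pair_params_def mem_outside)
    then show "\<forall>x\<in>fst p - {k}. group_of x \<noteq> group_of k"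
      "\<forall>x\<in>fst p - {k}. \<forall>y\<in>fst p - {k}. group_of x = group_of y"
      by (auto simp: mem_user_group)
  qed
  have spread: "\<forall>x\<in>fst p - {k}. group_of x \<noteq> group_of k"
    "\<exists>x\<in>fst p - {k}. \<exists>y\<in>fst p - {k}. group_of x \<noteq> group_of y"
    if p: "p \<in> spread_label k ` spread_params m k" for p
  proof -
    obtain x y where "fst p = {k, x, y}"
      and "group_of x \<noteq> group_of k" "group_of y \<noteq> group_of k" "group_of y \<noteq> group_of x"
      using p by (auto simp: spread_label_def spread_params_def mem_outside mem_user_group)
    moreover from this have "x \<in> fst p - {k}" "y \<in> fst p - {k}"
      by auto
    ultimately show "\<forall>x\<in>fst p - {k}. group_of x \<noteq> group_of k"
      "\<exists>x\<in>fst p - {k}. \<exists>y\<in>fst p - {k}. group_of x \<noteq> group_of y"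
      by auto
  qed
  show "mate_label k ` mate_params m k \<inter> pair_label k ` pair_params m k = {}"
    using mate pair(1) by blast
  show "mate_label k ` mate_params m k \<inter> spread_label k ` spread_params m k = {}"
    using mate spread(1) by blast
  show "pair_label k ` pair_params m k \<inter> spread_label k ` spread_params m k = {}"
    using pair(2) spread(2) by blast
qed

lemma card_outside:
  assumes "k \<in> users m"
  shows "finite (outside m k)" "card (outside m k) = 3 * m - 3"
  using assms card_users_diff_user_group[of "group_of k" m] by (simp_all add: outside_def mem_users)

lemma card_outside_diff:
  assumes "k \<in> users m" "x \<in> outside m k"
  shows "card (outside m k - user_group (group_of x)) = 3 * m - 6"
proof -
  have "user_group (group_of x) \<subseteq> outside m k"
    using assms(2) by (auto simp: mem_outside mem_user_group)
  then show ?thesis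
    using card_outside[OF assms(1)] by (simp add: card_Diff_subset)
qed

lemma card_labels_containing:
  assumes k: "k \<in> users m"
  shows "card {p\<in>labels m. k \<in> fst p} = 9 * (m - 1) * (2 * m - 1)"
proof -
  have "{p\<in>labels m. k \<in> fst p} =
    mate_label k ` mate_params m k \<union> pair_label k ` pair_params m k \<union> spread_label k ` spread_params m k"
    using labels_containing_subset mate_labels_subset[OF k] pair_labels_subset[OF k]
      spread_labels_subset[OF k] by blast
  moreover have "finite (mate_params m k)" "finite (pair_params m k)" "finite (spread_params m k)"
    using card_outside(1)[OF k] by (simp_all add: mate_params_def pair_params_def spread_params_def)
  ultimately have "card {p\<in>labels m. k \<in> fst p} =
      card (mate_params m k) + card (pair_params m k) + card (spread_params m k)"
    using disjoint_label_families inj_on_mate_label inj_on_pair_label inj_on_spread_label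
    by (simp add: card_Un_disjoint Int_Un_distrib2 card_image)
  also have "\<dots> = 2 * (3 * m - 3) * 3 + (3 * m - 3) * 3 + (3 * m - 3) * ((3 * m - 6) * 2)"
    using k in_user_group_of[of k] card_outside[OF k] card_outside_diff[OF k]
    by (simp add: mate_params_def pair_params_def spread_params_def card_cartesian_product mem_users)
  also have "\<dots> = 9 * (m - 1) * (2 * m - 1)"
    by (cases m; cases "m - 1") (simp_all add: algebra_simps)
  finally show ?thesis .
qed

lemma sum_card_containing:
  assumes "finite L" "finite U" "\<And>p. p \<in> L \<Longrightarrow> f p \<subseteq> U \<and> card (f p) = r"
  shows "(\<Sum>k\<in>U. card {p\<in>L. k \<in> f p}) = r * card L"
proof -
  have "(\<Sum>k\<in>U. card {p\<in>L. k \<in> f p}) = (\<Sum>k\<in>U. \<Sum>p\<in>L. if k \<in> f p then 1 else 0)"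
    using assms(1) by (simp add: sum.If_cases Int_def)
  also have "\<dots> = (\<Sum>p\<in>L. \<Sum>k\<in>U. if k \<in> f p then 1 else 0)"
    by (rule sum.swap)
  also have "\<dots> = (\<Sum>p\<in>L. card (U \<inter> f p))"
    using assms(2) by (simp add: sum.If_cases)
  also have "\<dots> = (\<Sum>p\<in>L. r)"
    using assms(3) by (simp add: Int_absorb1)
  finally show ?thesis by simp
qed

lemma card_labels: "card (labels m) = 9 * m * (m - 1) * (2 * m - 1)"
proof -
  have fin: "finite (labels m)"
    by (rule finite_subset[of _ "Pow (users m) \<times> {..<5}"]) (auto simp: labels_def copies_def split: if_splits)
  have "3 * card (labels m) = (\<Sum>k\<in>users m. card {p\<in>labels m. k \<in> fst p})"
    by (rule sum_card_containing[symmetric]) (use fin in \<open>auto simp: labels_def\<close>)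
  also have "\<dots> = 3 * m * (9 * (m - 1) * (2 * m - 1))"
    by (simp add: card_labels_containing)
  finally show ?thesis by simp
qed

section \<open>Cache size and rate\<close>

lemma cache_budget:
  assumes "k \<in> users m"
  shows "real N * (real (9 * m * (m - 1) * (2 * m - 1)) - real (card {p\<in>labels m. k \<in> fst p}))
    = real N * (real m - 1) / real m * real (9 * m * (m - 1) * (2 * m - 1))"
proof -
  define c where "c = card {p\<in>labels m. k \<in> fst p}"
  have "9 * m * (m - 1) * (2 * m - 1) = m * c" "m \<ge> 1"
    using card_labels_containing[OF assms] assms by (simp_all add: c_def mem_users)
  then show ?thesis
    unfolding c_def[symmetric] by (simp add: field_simps)
qed

lemma grouped_rate:
  assumes "m \<ge> 2" "N \<ge> 1"
  shows "real N / (real N * (real m - 1) / real m) - 1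
    = real (3 * m * (6 * m - 3)) / real (9 * m * (m - 1) * (2 * m - 1))"
proof -
  define c where "c = 9 * real m * (2 * real m - 1)"
  have "real (3 * m * (6 * m - 3)) = c" "real (9 * m * (m - 1) * (2 * m - 1)) = c * (real m - 1)"
    using assms by (simp_all add: c_def of_nat_diff)
  moreover have "c \<noteq> 0" "real m - 1 > 0"
    using assms by (simp_all add: c_def)
  ultimately show ?thesis
    using assms(2) by (simp add: field_simps)
qed

theorem mainTheorem7:
  fixes m N K :: nat and M :: real
  assumes "m \<ge> 3" and "K = 3 * m" and "N \<ge> 1"
    and "0 < M" and "M \<le> real N"
    and "real K * M / real N = real K - 3"
  shows "achievable_with_subpacketization N K M (real N / M - 1) (9 * m * (m - 1) * (2 * m - 1))"
proof -
  define F where "F = 9 * m * (m - 1) * (2 * m - 1)"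
  have "F \<ge> 1"
    using assms(1) by (simp add: F_def; linarith)
  then obtain e where "bij_betw e (labels m) {1..F}"
    using card_labels[of m] finite_same_card_bij[of "labels m" "{1..F}"] card_ge_0_finite
    unfolding F_def by force
  then interpret xor_delivery K F "labels m" e fst "transmissions m" "recipients m" subpacket "6 * m - 3"
    unfolding assms(2) by (rule xor_delivery_groups)
  have M: "M = real N * (real m - 1) / real m"
    using assms(1,2,3,6) by (simp add: field_simps)
  have "d2d_scheme N K M F b (real (K * (6 * m - 3)) / real F)" for b
    by (rule d2d_scheme[OF assms(3) eq_refl])
      (use cache_budget in \<open>simp add: M F_def assms(2) users_def\<close>)
  moreover have "real N / M - 1 = real (K * (6 * m - 3)) / real F"
    unfolding M F_def assms(2) using assms(1,3) by (intro grouped_rate) simp_all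
  ultimately show ?thesis
    using \<open>F \<ge> 1\<close> unfolding achievable_with_subpacketization_def F_def by simp
qed

end
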